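(* For every finite strictly binary tree $T$ there exists an ultrametric space $(X,d)\in\mathfrak U$ such that the graphs $T$ and $\overline{T}_X$ are isomorphic.
   Context: $\operatorname{Sp}(X)=\{d(x,y):x\neq y\}$; $\mathfrak U$ is the class of finite ultrametric spaces $X$ with $|\operatorname{Sp}(X)|=|X|-1$. A strictly binary tree is a rooted tree whose root is adjacent to exactly two nodes and whose non-root non-leaf nodes are adjacent to exactly three nodes (a one-node tree counts as strictly binary). For a finite ultrametric space $X$ (with $X\cap\operatorname{Sp}(X)=\varnothing$), the representing tree $T_X$ is the labelled rooted tree defined recursively: for $X=\{x\}$ it is a single node labelled $x$; for $|X|\ge2$ the root is labelled $\operatorname{diam}X$ and has one child for each class $X_i$ of the equivalence relation $x\sim y\iff d(x,y)<\operatorname{diam}X$, that child being labelled $x$ if $X_i=\{x\}$ and otherwise labelled $\operatorname{diam}X_i$ and carrying the recursively constructed tree for $X_i$. $\overline{T}_X$ is the rooted tree obtained from $T_X$ by forgetting the labels. *)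

theory Defs
  imports Complex_Main
begin

definition ultrametric_space :: "'a set \<Rightarrow> ('a \<Rightarrow> 'a \<Rightarrow> real) \<Rightarrow> bool" where
  "ultrametric_space X d \<longleftrightarrow>
     (\<forall>x\<in>X. \<forall>y\<in>X. d x y \<ge> 0 \<and> (d x y = 0 \<longleftrightarrow> x = y) \<and> d x y = d y x) \<and>
     (\<forall>x\<in>X. \<forall>y\<in>X. \<forall>z\<in>X. d x y \<le> max (d x z) (d z y))"

definition Sp :: "'a set \<Rightarrow> ('a \<Rightarrow> 'a \<Rightarrow> real) \<Rightarrow> real set" where
  "Sp X d = {d x y | x y. x \<in> X \<and> y \<in> X \<and> x \<noteq> y}"

definition in_U :: "'a set \<Rightarrow> ('a \<Rightarrow> 'a \<Rightarrow> real) \<Rightarrow> bool" where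
  "in_U X d \<longleftrightarrow> finite X \<and> X \<noteq> {} \<and> ultrametric_space X d \<and> card (Sp X d) = card X - 1"

definition diam :: "'a set \<Rightarrow> ('a \<Rightarrow> 'a \<Rightarrow> real) \<Rightarrow> real" where
  "diam B d = Max {d x y | x y. x \<in> B \<and> y \<in> B}"

definition child_sets :: "'a set \<Rightarrow> ('a \<Rightarrow> 'a \<Rightarrow> real) \<Rightarrow> 'a set set" where
  "child_sets B d = {{y \<in> B. d x y < diam B d} | x. x \<in> B}"

text \<open>Nodes of the representing tree T_X, each node identified with the subset of X
  it represents (X for the root, the classes X_i recursively below).\<close>
inductive_set rep_nodes :: "'a set \<Rightarrow> ('a \<Rightarrow> 'a \<Rightarrow> real) \<Rightarrow> 'a set set"
  for X d where
  root: "X \<in> rep_nodes X d"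
| child: "B \<in> rep_nodes X d \<Longrightarrow> card B \<ge> 2 \<Longrightarrow> C \<in> child_sets B d \<Longrightarrow> C \<in> rep_nodes X d"

definition rep_edges :: "'a set \<Rightarrow> ('a \<Rightarrow> 'a \<Rightarrow> real) \<Rightarrow> ('a set \<times> 'a set) set" where
  "rep_edges X d =
     {(B, C) | B C. B \<in> rep_nodes X d \<and> card B \<ge> 2 \<and> C \<in> child_sets B d}
   \<union> {(C, B) | B C. B \<in> rep_nodes X d \<and> card B \<ge> 2 \<and> C \<in> child_sets B d}"

definition finite_tree :: "'v set \<Rightarrow> ('v \<times> 'v) set \<Rightarrow> bool" where
  "finite_tree V E \<longleftrightarrow> finite V \<and> V \<noteq> {} \<and> E \<subseteq> V \<times> V \<and> sym E \<and> irrefl E \<and>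
     (\<forall>u\<in>V. \<forall>v\<in>V. (u, v) \<in> E\<^sup>*) \<and> card E = 2 * (card V - 1)"

definition degree :: "('v \<times> 'v) set \<Rightarrow> 'v \<Rightarrow> nat" where
  "degree E v = card {w. (v, w) \<in> E}"

definition strictly_binary_tree :: "'v set \<Rightarrow> ('v \<times> 'v) set \<Rightarrow> 'v \<Rightarrow> bool" where
  "strictly_binary_tree V E r \<longleftrightarrow> finite_tree V E \<and> r \<in> V \<and>
     (card V = 1 \<or>
      (degree E r = 2 \<and> (\<forall>v\<in>V - {r}. degree E v = 1 \<or> degree E v = 3)))"

definition graph_iso :: "'v set \<Rightarrow> ('v \<times> 'v) set \<Rightarrow> 'w set \<Rightarrow> ('w \<times> 'w) set \<Rightarrow> bool" where
  "graph_iso V1 E1 V2 E2 \<longleftrightarrow> (\<exists>f. bij_betw f V1 V2 \<and>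
     (\<forall>u\<in>V1. \<forall>v\<in>V1. (u, v) \<in> E1 \<longleftrightarrow> (f u, f v) \<in> E2))"

end

theory Submission
  imports Defs
begin

text \<open>
  A strictly binary tree with more than one vertex has a
  cherry: it has two more leaves than non-root inner vertices, so two leaves share their
  neighbour p. Removing the cherry leaves a strictly binary tree, which by induction is the
  representing tree of some X in U; there p is a leaf, i.e. a singleton {x}. Adding a twin x'
  of x at a distance smaller than every distance of X adds exactly one new distance, so the
  space stays in U, and it splits the leaf {x} into the node {x, x'} with the two new leaves
  {x} and {x'}: the cherry is back.
\<close>

section \<open>Ultrametric spaces and their representing trees\<close>

lemma ultrametric_spaceD:
  assumes "ultrametric_space X d" "x \<in> X" "y \<in> X"
  shows "d x x = 0" "x \<noteq> y \<Longrightarrow> 0 < d x y" "d x y = d y x"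
  using assms unfolding ultrametric_space_def by (auto simp: less_le)

lemma two_le_cardE:
  assumes "2 \<le> card B"
  obtains x y where "x \<in> B" "y \<in> B" "x \<noteq> y"
  using assms card_le_Suc0_iff_eq[of B] by (cases "finite B") auto

lemma dist_le_diam: "finite B \<Longrightarrow> x \<in> B \<Longrightarrow> y \<in> B \<Longrightarrow> d x y \<le> diam B d"
  unfolding diam_def by (rule Max_ge) (auto simp: finite_image_set2)

lemma diam_attained:
  assumes "finite B" "B \<noteq> {}"
  obtains x y where "x \<in> B" "y \<in> B" "diam B d = d x y"
proof -
  have "diam B d \<in> {d x y | x y. x \<in> B \<and> y \<in> B}"
    unfolding diam_def using assms by (intro Max_in) (auto simp: finite_image_set2)
  then show thesis using that by blast
qed

lemma diam_pos:
  assumes "ultrametric_space X d" "B \<subseteq> X" "2 \<le> card B"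
  shows "0 < diam B d"
proof -
  obtain x y where xy: "x \<in> B" "y \<in> B" "x \<noteq> y"
    using assms(3) by (rule two_le_cardE)
  have "finite B" using assms(3) card.infinite by fastforce
  have "0 < d x y"
    using ultrametric_spaceD(2)[OF assms(1) subsetD[OF assms(2) xy(1)] subsetD[OF assms(2) xy(2)] xy(3)] .
  also have "d x y \<le> diam B d" using dist_le_diam[OF \<open>finite B\<close> xy(1,2)] .
  finally show ?thesis .
qed

lemma finite_Sp:
  assumes "finite X"
  shows "finite (Sp X d)"
proof -
  have "Sp X d \<subseteq> (\<lambda>(u, v). d u v) ` (X \<times> X)" unfolding Sp_def by auto
  then show ?thesis by (rule finite_subset) (simp add: assms)
qed

lemma Sp_pos:
  assumes "ultrametric_space X d" "s \<in> Sp X d"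
  shows "0 < s"
proof -
  obtain u v where "u \<in> X" "v \<in> X" "u \<noteq> v" "s = d u v"
    using assms(2) unfolding Sp_def by blast
  then show ?thesis using ultrametric_spaceD(2)[OF assms(1)] by simp
qed

lemma rep_nodes_subset: "B \<in> rep_nodes X d \<Longrightarrow> B \<subseteq> X"
  by (induction rule: rep_nodes.induct) (auto simp: child_sets_def)

lemma finite_rep_nodes: "finite X \<Longrightarrow> finite (rep_nodes X d)"
  by (rule finite_subset[of _ "Pow X"]) (auto dest: rep_nodes_subset)

lemma mem_own_child_set:
  assumes "ultrametric_space X d" "B \<subseteq> X" "2 \<le> card B" "z \<in> B"
  shows "z \<in> {y \<in> B. d z y < diam B d}"
  using assms diam_pos[OF assms(1-3)] ultrametric_spaceD(1)[OF assms(1)] by auto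

lemma rep_nodes_nonempty:
  assumes "ultrametric_space X d" "X \<noteq> {}" "B \<in> rep_nodes X d"
  shows "B \<noteq> {}"
  using assms(3)
proof (induction rule: rep_nodes.induct)
  case (child B C)
  then show ?case
    using mem_own_child_set[OF assms(1) rep_nodes_subset] by (fastforce simp: child_sets_def)
qed (use assms in simp)

lemma two_child_sets:
  assumes "ultrametric_space X d" "B \<subseteq> X" "2 \<le> card B"
  obtains C1 C2 where "C1 \<in> child_sets B d" "C2 \<in> child_sets B d" "C1 \<noteq> C2"
proof -
  have "finite B" "B \<noteq> {}" using assms(3) card.infinite by fastforce+
  then obtain u v where uv: "u \<in> B" "v \<in> B" "diam B d = d u v" by (rule diam_attained)
  have "v \<notin> {y \<in> B. d u y < diam B d}" "v \<in> {y \<in> B. d v y < diam B d}"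
    using uv mem_own_child_set[OF assms] by auto
  moreover have "{y \<in> B. d u y < diam B d} \<in> child_sets B d" "{y \<in> B. d v y < diam B d} \<in> child_sets B d"
    unfolding child_sets_def using uv by auto
  ultimately show thesis using that by blast
qed

definition rep_arcs :: "'a set \<Rightarrow> ('a \<Rightarrow> 'a \<Rightarrow> real) \<Rightarrow> ('a set \<times> 'a set) set" where
  "rep_arcs X d = {(B, C). B \<in> rep_nodes X d \<and> 2 \<le> card B \<and> C \<in> child_sets B d}"

lemma rep_edges_eq_arcs: "rep_edges X d = rep_arcs X d \<union> (rep_arcs X d)\<inverse>"
  unfolding rep_edges_def rep_arcs_def by auto

lemma rep_edges_subset: "rep_edges X d \<subseteq> rep_nodes X d \<times> rep_nodes X d"
  unfolding rep_edges_def by (auto intro: rep_nodes.child)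

lemma two_le_degree_rep_edges:
  assumes "ultrametric_space X d" "finite X" "B \<in> rep_nodes X d" "2 \<le> card B"
  shows "2 \<le> degree (rep_edges X d) B"
proof -
  obtain C1 C2 where C: "C1 \<in> child_sets B d" "C2 \<in> child_sets B d" "C1 \<noteq> C2"
    using two_child_sets[OF assms(1) rep_nodes_subset[OF assms(3)] assms(4)] .
  have "(B, C1) \<in> rep_arcs X d" "(B, C2) \<in> rep_arcs X d"
    using assms(3,4) C unfolding rep_arcs_def by simp_all
  then have sub: "{C1, C2} \<subseteq> {C. (B, C) \<in> rep_edges X d}"
    unfolding rep_edges_eq_arcs by blast
  have "{C. (B, C) \<in> rep_edges X d} \<subseteq> rep_nodes X d"
    using rep_edges_subset by fast
  then have "finite {C. (B, C) \<in> rep_edges X d}"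
    using finite_rep_nodes[OF assms(2)] by (rule finite_subset)
  from card_mono[OF this sub] show ?thesis
    unfolding degree_def using C(3) by simp
qed

section \<open>Finite trees and cherries\<close>

lemma card_eq_sum_degree:
  assumes "E \<subseteq> V \<times> V" "finite V"
  shows "card E = (\<Sum>v\<in>V. degree E v)"
proof -
  have "E = Sigma V (\<lambda>v. {w. (v, w) \<in> E})" using assms(1) by auto
  moreover have "card (Sigma V (\<lambda>v. {w. (v, w) \<in> E})) = (\<Sum>v\<in>V. card {w. (v, w) \<in> E})"
    using assms by (intro card_SigmaI) (auto intro: finite_subset[of _ V])
  ultimately show ?thesis unfolding degree_def by simp
qed

lemma finite_tree_adjacent_leaves:
  assumes "finite_tree V E" "a \<in> V" "{w. (a, w) \<in> E} = {q}" "{w. (q, w) \<in> E} = {a}"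
  shows "V = {a, q}"
proof -
  have closed: "E\<^sup>* `` {a, q} = {a, q}"
    using assms(3,4) by (intro Image_closed_trancl) auto
  have "v \<in> E\<^sup>* `` {a, q}" if "v \<in> V" for v
    using assms(1,2) that unfolding finite_tree_def by blast
  then have "V \<subseteq> {a, q}" unfolding closed by blast
  moreover have "{a, q} \<subseteq> V" using assms(1-3) unfolding finite_tree_def by auto
  ultimately show ?thesis by (rule subset_antisym)
qed

lemma rtrancl_avoiding_pendant:
  assumes "sym E" "{w. (a, w) \<in> E} = {p}" "p \<noteq> a"
    and "(u, v) \<in> E\<^sup>*" "u \<noteq> a" "v \<noteq> a"
  shows "(u, v) \<in> {(x, y) \<in> E. x \<noteq> a \<and> y \<noteq> a}\<^sup>*"
proof -
  let ?E' = "{(x, y) \<in> E. x \<noteq> a \<and> y \<noteq> a}"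
  have into_a: "x = p" if "(x, a) \<in> E" for x
    using that assms(1,2) by (auto dest: symD)
  have out_of_a: "x = p" if "(a, x) \<in> E" for x
    using that assms(2) by auto
  \<comment> \<open>a walk can only enter and leave the pendant vertex a through p\<close>
  have "(y \<noteq> a \<longrightarrow> (u, y) \<in> ?E'\<^sup>*) \<and> (y = a \<longrightarrow> (u, p) \<in> ?E'\<^sup>*)" if "(u, y) \<in> E\<^sup>*" for y
    using that
  proof (induction rule: rtrancl_induct)
    case (step y z)
    then show ?case
      using assms(3) into_a out_of_a by (cases "y = a"; cases "z = a") (auto intro: rtrancl_into_rtrancl)
  qed (use assms(5) in simp)
  from this[OF assms(4)] show ?thesis using assms(6) by simp
qed

lemma pendant_edges_split:
  assumes "E \<subseteq> V \<times> V" "sym E" "{w. (a, w) \<in> E} = {p}"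
  shows "E = Restr E (V - {a}) \<union> {(a, p), (p, a)}"
proof -
  have "(a, w) \<in> E \<longleftrightarrow> w = p" for w
    using assms(3) by blast
  moreover have "(w, a) \<in> E \<longleftrightarrow> w = p" for w
    using assms(2) calculation by (auto dest: symD)
  ultimately show ?thesis using assms(1) by auto
qed

lemma degree_remove_pendant:
  assumes "E \<subseteq> V \<times> V" "sym E" "{w. (a, w) \<in> E} = {p}" "v \<noteq> a"
  shows "degree (Restr E (V - {a})) v = (if v = p then degree E v - 1 else degree E v)"
proof -
  have "(v, a) \<in> E \<longleftrightarrow> v = p"
    using assms(2,3) by (auto dest: symD)
  moreover have "{w. (v, w) \<in> Restr E (V - {a})} = {w. (v, w) \<in> E} - {a}"
    using assms(1,4) by auto
  ultimately show ?thesis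
    unfolding degree_def by (simp add: card_Diff_singleton_if)
qed

lemma finite_tree_remove_pendant:
  assumes ft: "finite_tree V E" and a: "{w. (a, w) \<in> E} = {p}"
  shows "finite_tree (V - {a}) (Restr E (V - {a}))"
proof -
  let ?V' = "V - {a}" and ?E' = "Restr E (V - {a})"
  have fin: "finite V" and EV: "E \<subseteq> V \<times> V" and "sym E" "irrefl E"
    and conn: "\<And>u v. u \<in> V \<Longrightarrow> v \<in> V \<Longrightarrow> (u, v) \<in> E\<^sup>*"
    and cE: "card E = 2 * (card V - 1)"
    using ft unfolding finite_tree_def by auto
  have "(a, p) \<in> E" using a by auto
  then have "a \<in> V" "p \<in> ?V'" using EV \<open>irrefl E\<close> by (auto simp: irrefl_def)
  have "card E = card (?E' \<union> {(a, p), (p, a)})"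
    using pendant_edges_split[OF EV \<open>sym E\<close> a] by (rule arg_cong)
  also have "\<dots> = card ?E' + card {(a, p), (p, a)}"
    using finite_subset[OF EV] fin by (intro card_Un_disjoint) auto
  finally have "card E = card ?E' + 2" using \<open>p \<in> ?V'\<close> by simp
  moreover have "card V = card ?V' + 1"
    using \<open>a \<in> V\<close> fin by (metis card_Suc_Diff1 Suc_eq_plus1)
  moreover have "card ?V' \<ge> 1"
    using \<open>p \<in> ?V'\<close> fin by (auto simp: Suc_le_eq card_gt_0_iff)
  ultimately have "card ?E' = 2 * (card ?V' - 1)" using cE by simp
  moreover have "(u, v) \<in> ?E'\<^sup>*" if "u \<in> ?V'" "v \<in> ?V'" for u v
  proof -
    have "{(x, y) \<in> E. x \<noteq> a \<and> y \<noteq> a} = ?E'" using EV by auto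
    then show ?thesis
      using rtrancl_avoiding_pendant[OF \<open>sym E\<close> a _ conn] that \<open>p \<in> ?V'\<close> by auto
  qed
  moreover have "sym ?E'" "irrefl ?E'"
    using \<open>sym E\<close> \<open>irrefl E\<close> unfolding sym_def irrefl_def by blast+
  moreover have "finite ?V'" "?V' \<noteq> {}" "?E' \<subseteq> ?V' \<times> ?V'"
    using fin \<open>p \<in> ?V'\<close> by auto
  ultimately show ?thesis unfolding finite_tree_def by blast
qed

lemma Restr_Restr_Diff: "Restr (Restr E (V - {a})) (V - {a} - {b}) = Restr E (V - {a, b})"
  by auto

lemma cherry_leaves_distinct_from_parent:
  assumes "sym E" "a \<noteq> b" "{w. (a, w) \<in> E} = {p}" "{w. (b, w) \<in> E} = {p}"
  shows "p \<noteq> a" "p \<noteq> b"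
proof -
  have "(a, p) \<in> E" "(b, p) \<in> E" using assms(3,4) by auto
  then have "(p, a) \<in> E" "(p, b) \<in> E" using assms(1) by (auto dest: symD)
  then show "p \<noteq> a" "p \<noteq> b" using assms(2-4) by auto
qed

lemma pendant_after_removing_sibling:
  assumes "E \<subseteq> V \<times> V" "sym E" "a \<noteq> b" "{w. (a, w) \<in> E} = {p}" "{w. (b, w) \<in> E} = {p}"
  shows "Restr E (V - {a}) \<subseteq> (V - {a}) \<times> (V - {a})" "sym (Restr E (V - {a}))"
    "{w. (b, w) \<in> Restr E (V - {a})} = {p}"
proof -
  have "p \<noteq> a" using cherry_leaves_distinct_from_parent[OF assms(2-5)] by simp
  have "(b, w) \<in> Restr E (V - {a}) \<longleftrightarrow> w = p" for w
    using assms(1,3,5) \<open>p \<noteq> a\<close> by blast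
  then show "{w. (b, w) \<in> Restr E (V - {a})} = {p}" by blast
qed (use assms(2) in \<open>auto simp: sym_def\<close>)

lemma cherry_edges_split:
  assumes "E \<subseteq> V \<times> V" "sym E" "a \<noteq> b" "{w. (a, w) \<in> E} = {p}" "{w. (b, w) \<in> E} = {p}"
  shows "E = Restr E (V - {a, b}) \<union> {(a, p), (p, a)} \<union> {(b, p), (p, b)}"
proof -
  note E_a = pendant_after_removing_sibling[OF assms]
  have "E = Restr E (V - {a}) \<union> {(a, p), (p, a)}"
    using assms(1,2,4) by (rule pendant_edges_split)
  also have "Restr E (V - {a}) = Restr E (V - {a, b}) \<union> {(b, p), (p, b)}"
    using pendant_edges_split[OF E_a] unfolding Restr_Restr_Diff .
  finally show ?thesis by blast
qed

lemma degree_remove_cherry: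
  assumes "E \<subseteq> V \<times> V" "sym E" "a \<noteq> b" "{w. (a, w) \<in> E} = {p}" "{w. (b, w) \<in> E} = {p}"
    and "v \<notin> {a, b}"
  shows "degree (Restr E (V - {a, b})) v = (if v = p then degree E v - 2 else degree E v)"
  using degree_remove_pendant[OF pendant_after_removing_sibling[OF assms(1-5)], of v]
    degree_remove_pendant[OF assms(1,2,4), of v] assms(6)
  unfolding Restr_Restr_Diff by (cases "v = p") simp_all

lemma finite_tree_remove_cherry:
  assumes "finite_tree V E" "a \<noteq> b" "{w. (a, w) \<in> E} = {p}" "{w. (b, w) \<in> E} = {p}"
  shows "finite_tree (V - {a, b}) (Restr E (V - {a, b}))"
proof -
  have "E \<subseteq> V \<times> V" "sym E" using assms(1) unfolding finite_tree_def by auto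
  note E_a = pendant_after_removing_sibling[OF this assms(2-4)]
  have "finite_tree (V - {a}) (Restr E (V - {a}))"
    using assms(1,3) by (rule finite_tree_remove_pendant)
  from finite_tree_remove_pendant[OF this E_a(3)] show ?thesis
    unfolding Restr_Restr_Diff by (simp add: insert_commute Diff_insert2 [symmetric])
qed

lemma strictly_binary_tree_leaf_count:
  assumes "strictly_binary_tree V E r" "card V \<noteq> 1"
  shows "card {v \<in> V - {r}. degree E v = 1} = card {v \<in> V - {r}. degree E v = 3} + 2"
proof -
  define L where "L = {v \<in> V - {r}. degree E v = 1}"
  define I where "I = {v \<in> V - {r}. degree E v = 3}"
  have fin: "finite V" and EV: "E \<subseteq> V \<times> V" and cE: "card E = 2 * (card V - 1)"
    and "r \<in> V" "degree E r = 2" and "V - {r} = L \<union> I"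
    using assms unfolding strictly_binary_tree_def finite_tree_def L_def I_def by auto
  have "L \<inter> I = {}" "finite L" "finite I" using fin unfolding L_def I_def by auto
  \<comment> \<open>count edges by degrees: 2 (|V| - 1) = 2 + |L| + 3 |I|, while |V| = 1 + |L| + |I|\<close>
  have "card E = degree E r + (\<Sum>v\<in>L. degree E v) + (\<Sum>v\<in>I. degree E v)"
    using card_eq_sum_degree[OF EV fin] sum.remove[OF fin \<open>r \<in> V\<close>, of "degree E"]
      \<open>V - {r} = L \<union> I\<close> sum.union_disjoint[OF \<open>finite L\<close> \<open>finite I\<close> \<open>L \<inter> I = {}\<close>]
    by simp
  also have "\<dots> = 2 + card L + 3 * card I" unfolding L_def I_def \<open>degree E r = 2\<close> by simp
  finally have "card E = 2 + card L + 3 * card I" .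
  moreover have "card V = 1 + card L + card I"
    using card_Suc_Diff1[OF fin \<open>r \<in> V\<close>] \<open>V - {r} = L \<union> I\<close>
      card_Un_disjoint[OF \<open>finite L\<close> \<open>finite I\<close> \<open>L \<inter> I = {}\<close>] by simp
  ultimately show ?thesis using cE unfolding L_def I_def by simp
qed

lemma strictly_binary_tree_leaf_neighbour:
  assumes sbt: "strictly_binary_tree V E r" and "card V \<noteq> 1"
    and l: "l \<in> V - {r}" "{w. (l, w) \<in> E} = {q}"
  shows "q \<in> insert r {v \<in> V - {r}. degree E v = 3}"
proof -
  have ft: "finite_tree V E" and "r \<in> V" "degree E r = 2"
    and deg_V: "\<And>v. v \<in> V - {r} \<Longrightarrow> degree E v = 1 \<or> degree E v = 3"
    using assms(1,2) unfolding strictly_binary_tree_def by auto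
  have "(l, q) \<in> E" using l(2) by blast
  then have "q \<in> V" "(q, l) \<in> E" using ft unfolding finite_tree_def by (auto dest: symD)
  moreover have "degree E q \<noteq> 1" if "q \<noteq> r"
  proof
    assume "degree E q = 1"
    then obtain l' where "{w. (q, w) \<in> E} = {l'}"
      unfolding degree_def by (rule card_1_singletonE)
    moreover have "l \<in> {w. (q, w) \<in> E}" using \<open>(q, l) \<in> E\<close> by simp
    ultimately have "{w. (q, w) \<in> E} = {l}" by simp
    with ft l have "V = {l, q}" by (intro finite_tree_adjacent_leaves) auto
    then show False using \<open>r \<in> V\<close> l(1) that by auto
  qed
  ultimately show ?thesis using deg_V[of q] by auto
qed

lemma strictly_binary_tree_obtain_cherry:
  assumes sbt: "strictly_binary_tree V E r" and "card V \<noteq> 1"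
  obtains a b p where "a \<noteq> b" "a \<in> V - {r}" "b \<in> V - {r}"
    "{w. (a, w) \<in> E} = {p}" "{w. (b, w) \<in> E} = {p}"
proof -
  define L where "L = {v \<in> V - {r}. degree E v = 1}"
  define I where "I = {v \<in> V - {r}. degree E v = 3}"
  have "finite V" using sbt unfolding strictly_binary_tree_def finite_tree_def by blast
  define nbr where "nbr v = the_elem {w. (v, w) \<in> E}" for v
  have nbr: "{w. (l, w) \<in> E} = {nbr l}" if "l \<in> L" for l
  proof -
    have "card {w. (l, w) \<in> E} = 1" using that unfolding L_def degree_def by simp
    then obtain q where "{w. (l, w) \<in> E} = {q}" by (rule card_1_singletonE)
    then show ?thesis unfolding nbr_def by simp
  qed
  have "nbr ` L \<subseteq> insert r I"
    using strictly_binary_tree_leaf_neighbour[OF assms] nbr unfolding L_def I_def by blast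
  moreover have "card (insert r I) < card L"
    using strictly_binary_tree_leaf_count[OF assms] \<open>finite V\<close> unfolding L_def I_def
    by (simp add: card_insert_if)
  ultimately have "\<not> inj_on nbr L"
    using card_inj_on_le[of nbr L "insert r I"] \<open>finite V\<close> unfolding I_def by fastforce
  then obtain a b where "a \<in> L" "b \<in> L" "a \<noteq> b" "nbr a = nbr b"
    unfolding inj_on_def by blast
  then show thesis using that[of a b "nbr a"] nbr unfolding L_def by auto
qed

lemma finite_tree_degree_zero:
  assumes "finite_tree V E" "v \<in> V" "degree E v = 0"
  shows "V = {v}"
proof -
  have "finite {w. (v, w) \<in> E}"
    using assms(1) unfolding finite_tree_def by (auto intro: finite_subset[of _ V])
  then have no_edge: "(v, w) \<notin> E" for w using assms(3) unfolding degree_def by simp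
  have "u = v" if "u \<in> V" for u
  proof -
    have "(v, u) \<in> E\<^sup>*" using assms(1,2) that unfolding finite_tree_def by blast
    then show ?thesis by (cases rule: converse_rtranclE) (auto simp: no_edge)
  qed
  then show ?thesis using assms(2) by blast
qed

lemma strictly_binary_tree_remove_cherry:
  assumes sbt: "strictly_binary_tree V E r" and "a \<noteq> b" "a \<noteq> r" "b \<noteq> r"
    and a: "{w. (a, w) \<in> E} = {p}" and b: "{w. (b, w) \<in> E} = {p}"
  shows "strictly_binary_tree (V - {a, b}) (Restr E (V - {a, b})) r"
proof -
  let ?V' = "V - {a, b}" and ?E' = "Restr E (V - {a, b})"
  have ft: "finite_tree V E" and "r \<in> V" using sbt unfolding strictly_binary_tree_def by auto
  have EV: "E \<subseteq> V \<times> V" "sym E" and fin: "finite V" using ft unfolding finite_tree_def by auto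
  have "(a, p) \<in> E" "(b, p) \<in> E" using a b by auto
  then have "(p, a) \<in> E" "(p, b) \<in> E" "a \<in> V" "b \<in> V" "p \<in> V"
    using EV by (auto dest: symD)
  have "p \<noteq> a" "p \<noteq> b" by (rule cherry_leaves_distinct_from_parent[OF EV(2) \<open>a \<noteq> b\<close> a b])+
  then have "p \<in> ?V'" using \<open>p \<in> V\<close> by simp
  have "card V \<noteq> 1" using \<open>a \<in> V\<close> \<open>b \<in> V\<close> \<open>a \<noteq> b\<close> by (auto simp: card_1_singleton_iff)
  then have deg_r: "degree E r = 2" and deg_V: "\<And>v. v \<in> V - {r} \<Longrightarrow> degree E v = 1 \<or> degree E v = 3"
    using sbt unfolding strictly_binary_tree_def by auto
  have deg': "degree ?E' v = (if v = p then degree E v - 2 else degree E v)" if "v \<in> ?V'" for v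
    using degree_remove_cherry[OF EV \<open>a \<noteq> b\<close> a b] that by simp
  have "finite_tree ?V' ?E'"
    using ft \<open>a \<noteq> b\<close> a b by (rule finite_tree_remove_cherry)
  moreover have "r \<in> ?V'" using \<open>r \<in> V\<close> assms(3,4) by simp
  moreover have "card {a, b} \<le> degree E p"
    unfolding degree_def using \<open>(p, a) \<in> E\<close> \<open>(p, b) \<in> E\<close> EV(1) fin
    by (intro card_mono) (auto intro: finite_subset[of _ V])
  then have "2 \<le> degree E p" using \<open>a \<noteq> b\<close> by simp
  ultimately show ?thesis
  proof (cases "p = r")
    case True
    then have "degree ?E' r = 0" using deg'[OF \<open>r \<in> ?V'\<close>] deg_r by simp
    with \<open>finite_tree ?V' ?E'\<close> \<open>r \<in> ?V'\<close> have "?V' = {r}" by (rule finite_tree_degree_zero)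
    then show ?thesis using \<open>finite_tree ?V' ?E'\<close> unfolding strictly_binary_tree_def by simp
  next
    case False
    have "degree ?E' v = 1 \<or> degree ?E' v = 3" if "v \<in> ?V' - {r}" for v
      using deg'[of v] deg_V[of v] \<open>2 \<le> degree E p\<close> that by auto
    moreover have "degree ?E' r = 2" using deg'[OF \<open>r \<in> ?V'\<close>] False deg_r by simp
    ultimately show ?thesis
      using \<open>finite_tree ?V' ?E'\<close> \<open>r \<in> ?V'\<close> unfolding strictly_binary_tree_def by blast
  qed
qed

lemma cherry_parent_becomes_leaf:
  assumes sbt: "strictly_binary_tree V E r"
    and cherry: "a \<noteq> b" "a \<in> V - {r}" "b \<in> V - {r}" "{w. (a, w) \<in> E} = {p}" "{w. (b, w) \<in> E} = {p}"
  shows "p \<in> V - {a, b}" "degree (Restr E (V - {a, b})) p \<le> 1"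
proof -
  have "finite_tree V E" "card V \<noteq> 1" "r \<in> V"
    using sbt cherry(1-3) unfolding strictly_binary_tree_def by (auto simp: card_1_singleton_iff)
  then have EV: "E \<subseteq> V \<times> V" "sym E" and deg_le: "\<And>v. v \<in> V \<Longrightarrow> degree E v \<le> 3"
    using sbt unfolding strictly_binary_tree_def finite_tree_def by force+
  show "p \<in> V - {a, b}"
    using cherry EV cherry_leaves_distinct_from_parent[OF EV(2) cherry(1,4,5)] by auto
  then show "degree (Restr E (V - {a, b})) p \<le> 1"
    using degree_remove_cherry[OF EV cherry(1,4,5)] deg_le[of p] by simp
qed

section \<open>Graph isomorphisms\<close>

definition graph_iso_betw :: "('v \<Rightarrow> 'w) \<Rightarrow> 'v set \<Rightarrow> ('v \<times> 'v) set \<Rightarrow> 'w set \<Rightarrow> ('w \<times> 'w) set \<Rightarrow> bool"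
  where "graph_iso_betw f V E W F \<longleftrightarrow>
    bij_betw f V W \<and> (\<forall>u\<in>V. \<forall>v\<in>V. (u, v) \<in> E \<longleftrightarrow> (f u, f v) \<in> F)"

lemma graph_iso_betwD:
  assumes "graph_iso_betw f V E W F"
  shows "bij_betw f V W" "u \<in> V \<Longrightarrow> v \<in> V \<Longrightarrow> (u, v) \<in> E \<longleftrightarrow> (f u, f v) \<in> F"
  using assms unfolding graph_iso_betw_def by auto

lemma graph_iso_iff_graph_iso_betw: "graph_iso V E W F \<longleftrightarrow> (\<exists>f. graph_iso_betw f V E W F)"
  unfolding graph_iso_def graph_iso_betw_def ..

lemma graph_iso_betw_image:
  assumes "graph_iso_betw f V E W F" "F \<subseteq> W \<times> W" "inj_on g W"
  shows "graph_iso_betw (g \<circ> f) V E (g ` W) (map_prod g g ` F)"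
proof -
  note f = graph_iso_betwD(1)[OF assms(1)] and E = graph_iso_betwD(2)[OF assms(1)]
  have F: "(g s, g t) \<in> map_prod g g ` F \<longleftrightarrow> (s, t) \<in> F" if "s \<in> W" "t \<in> W" for s t
  proof
    assume "(g s, g t) \<in> map_prod g g ` F"
    then obtain s' t' where "(s', t') \<in> F" "g s' = g s" "g t' = g t" by auto
    moreover have "s' = s" "t' = t"
      using calculation assms(2) that by (auto intro: inj_onD[OF assms(3)])
    ultimately show "(s, t) \<in> F" by simp
  qed force
  show ?thesis
    unfolding graph_iso_betw_def
  proof (intro conjI ballI)
    show "bij_betw (g \<circ> f) V (g ` W)"
      using f inj_on_imp_bij_betw[OF assms(3)] by (rule bij_betw_trans)
  next
    fix u v assume "u \<in> V" "v \<in> V"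
    then show "(u, v) \<in> E \<longleftrightarrow> ((g \<circ> f) u, (g \<circ> f) v) \<in> map_prod g g ` F"
      using E F bij_betwE[OF f] by simp
  qed
qed

lemma graph_iso_betw_add_pendant:
  assumes iso: "graph_iso_betw f V E W F" and "E \<subseteq> V \<times> V" "F \<subseteq> W \<times> W"
    and "a \<notin> V" "A \<notin> W" "p \<in> V"
  shows "graph_iso_betw (f(a := A)) (insert a V) (E \<union> {(a, p), (p, a)})
    (insert A W) (F \<union> {(A, f p), (f p, A)})"
proof -
  note f = graph_iso_betwD(1)[OF iso] and E = graph_iso_betwD(2)[OF iso]
  have "bij_betw (f(a := A)) V W"
    using f by (rule bij_betw_cong[THEN iffD1, rotated]) (use assms(4) in auto)
  from notIn_Un_bij_betw[OF _ _ this, of a] have "bij_betw (f(a := A)) (insert a V) (insert A W)"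
    using assms(4,5) by simp
  moreover have "(u, v) \<in> E \<union> {(a, p), (p, a)} \<longleftrightarrow>
      ((f(a := A)) u, (f(a := A)) v) \<in> F \<union> {(A, f p), (f p, A)}"
    if uv: "u \<in> insert a V" "v \<in> insert a V" for u v
  proof -
    have inj: "f x = f p \<longleftrightarrow> x = p" if "x \<in> V" for x
      using f that assms(6) unfolding bij_betw_def inj_on_def by blast
    have fA: "f x \<noteq> A" if "x \<in> V" for x
      using bij_betwE[OF f] that assms(5) by blast
    have no_edges: "(a, x) \<notin> E" "(x, a) \<notin> E" "(A, y) \<notin> F" "(y, A) \<notin> F" for x y
      using assms(2-5) by auto
    consider "u \<in> V" "v \<in> V" | "u = a" "v \<in> V" | "u \<in> V" "v = a" | "u = a" "v = a"
      using uv by blast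
    then show ?thesis
      using E[of u v] inj[of u] inj[of v] fA[of u] fA[of v] fA[of p] no_edges assms(4,6)
      by cases auto
  qed
  ultimately show ?thesis unfolding graph_iso_betw_def by blast
qed

lemma degree_graph_iso_betw:
  assumes iso: "graph_iso_betw f V E W F" and "E \<subseteq> V \<times> V" "F \<subseteq> W \<times> W" "v \<in> V"
  shows "degree F (f v) = degree E v"
proof -
  note f = graph_iso_betwD(1)[OF iso] and E = graph_iso_betwD(2)[OF iso]
  have "{w. (f v, w) \<in> F} = f ` {w. (v, w) \<in> E}"
  proof (intro equalityI subsetI)
    fix w' assume "w' \<in> {w. (f v, w) \<in> F}"
    then obtain w where "w \<in> V" "w' = f w"
      using assms(3) f unfolding bij_betw_def by blast
    then show "w' \<in> f ` {w. (v, w) \<in> E}" using E assms(4) \<open>w' \<in> _\<close> by auto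
  qed (use E assms(2,4) in auto)
  moreover have "inj_on f {w. (v, w) \<in> E}"
    using f assms(2) unfolding bij_betw_def by (auto intro: inj_on_subset)
  ultimately show ?thesis unfolding degree_def by (simp add: card_image)
qed

section \<open>Adding a twin point\<close>

locale twin_point =
  fixes X :: "'a set" and d :: "'a \<Rightarrow> 'a \<Rightarrow> real" and x x' :: 'a
  assumes in_U: "in_U X d" and x_mem: "x \<in> X" and x'_not_mem: "x' \<notin> X"
begin

definition proj :: "'a \<Rightarrow> 'a" where
  "proj u = (if u = x' then x else u)"

text \<open>The new point x' is a twin of x at distance eps below all distances of X;
  the 1 only matters when X is a single point and Sp X d is empty.\<close>

definition eps :: real where
  "eps = Min (insert 1 (Sp X d)) / 2"

definition dY :: "'a \<Rightarrow> 'a \<Rightarrow> real" where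
  "dY u v = (if u = v then 0 else if proj u = proj v then eps else d (proj u) (proj v))"

text \<open>A node B of the old representing tree becomes the node lift B of the new one.\<close>

definition lift :: "'a set \<Rightarrow> 'a set" where
  "lift B = (if x \<in> B then insert x' B else B)"

lemma finite_X: "finite X" and ultrametric_X: "ultrametric_space X d"
  and card_Sp_X: "card (Sp X d) = card X - 1"
  using in_U unfolding in_U_def by auto

lemma x_neq_x': "x \<noteq> x'"
  using x_mem x'_not_mem by blast

lemma eps_pos: "0 < eps"
proof -
  have "0 < Min (insert 1 (Sp X d))"
    using finite_Sp[OF finite_X] Sp_pos[OF ultrametric_X] by (subst Min_gr_iff) auto
  then show ?thesis unfolding eps_def by simp
qed

lemma eps_less: "s \<in> Sp X d \<Longrightarrow> eps < s"
proof -
  assume s: "s \<in> Sp X d"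
  have "Min (insert 1 (Sp X d)) \<le> s" using finite_Sp[OF finite_X] s by (intro Min_le) auto
  then show ?thesis using eps_pos unfolding eps_def by simp
qed

lemma proj_mem: "u \<in> insert x' X \<Longrightarrow> proj u \<in> X"
  unfolding proj_def using x_mem by auto

lemma proj_id: "u \<in> X \<Longrightarrow> proj u = u"
  unfolding proj_def using x'_not_mem by auto

lemma dY_eq_d:
  assumes "u \<in> X" "v \<in> X"
  shows "dY u v = d u v"
  unfolding dY_def proj_id[OF assms(1)] proj_id[OF assms(2)]
  using ultrametric_spaceD(1)[OF ultrametric_X assms(2,2)] by simp

lemma d_proj_mem_Sp:
  assumes "u \<in> insert x' X" "v \<in> insert x' X" "proj u \<noteq> proj v"
  shows "d (proj u) (proj v) \<in> Sp X d"
  unfolding Sp_def using proj_mem[OF assms(1)] proj_mem[OF assms(2)] assms(3) by blast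

lemma eps_le_dY:
  assumes "u \<in> insert x' X" "v \<in> insert x' X" "u \<noteq> v"
  shows "eps \<le> dY u v"
proof (cases "proj u = proj v")
  case False
  then have "eps < d (proj u) (proj v)" using eps_less d_proj_mem_Sp[OF assms(1,2)] by blast
  then show ?thesis unfolding dY_def using False assms(3) by simp
qed (simp add: dY_def assms(3))

lemma d_proj_le_dY:
  assumes "u \<in> insert x' X" "v \<in> insert x' X"
  shows "d (proj u) (proj v) \<le> dY u v"
proof -
  have "d (proj v) (proj v) = 0"
    using ultrametric_spaceD(1)[OF ultrametric_X proj_mem[OF assms(2)] proj_mem[OF assms(2)]] .
  then show ?thesis unfolding dY_def using eps_pos by auto
qed

lemma dY_nonneg: "u \<in> insert x' X \<Longrightarrow> v \<in> insert x' X \<Longrightarrow> 0 \<le> dY u v"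
  using eps_le_dY eps_pos by (cases "u = v") (simp add: dY_def, fastforce)

lemma ultrametric_Y: "ultrametric_space (insert x' X) dY"
  unfolding ultrametric_space_def
proof (intro conjI ballI)
  fix u v assume u: "u \<in> insert x' X" and v: "v \<in> insert x' X"
  show "0 \<le> dY u v" using u v by (rule dY_nonneg)
  show "dY u v = 0 \<longleftrightarrow> u = v"
  proof (cases "u = v")
    case False
    then show ?thesis using eps_le_dY[OF u v] eps_pos by simp
  qed (simp add: dY_def)
  show "dY u v = dY v u"
    using ultrametric_spaceD(3)[OF ultrametric_X proj_mem[OF u] proj_mem[OF v]] by (auto simp: dY_def)
next
  fix u v w assume u: "u \<in> insert x' X" and v: "v \<in> insert x' X" and w: "w \<in> insert x' X"
  show "dY u v \<le> max (dY u w) (dY w v)"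
  proof (cases "u \<noteq> v \<and> proj u \<noteq> proj v")
    case True
    then have "dY u v = d (proj u) (proj v)" by (simp add: dY_def)
    also have "\<dots> \<le> max (d (proj u) (proj w)) (d (proj w) (proj v))"
      using ultrametric_X proj_mem[OF u] proj_mem[OF v] proj_mem[OF w]
      unfolding ultrametric_space_def by blast
    also have "\<dots> \<le> max (dY u w) (dY w v)"
      using d_proj_le_dY[OF u w] d_proj_le_dY[OF w v] by linarith
    finally show ?thesis .
  next
    case False
    then have "dY u v \<le> eps" using eps_pos by (auto simp: dY_def)
    consider "u = v" | "u \<noteq> w" | "w \<noteq> v" by blast
    then show ?thesis
    proof cases
      case 1
      then show ?thesis using dY_nonneg[OF u w] by (simp add: dY_def)
    next
      case 2
      then show ?thesis using \<open>dY u v \<le> eps\<close> eps_le_dY[OF u w] by linarith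
    next
      case 3
      then show ?thesis using \<open>dY u v \<le> eps\<close> eps_le_dY[OF w v] by linarith
    qed
  qed
qed

lemma Sp_Y: "Sp (insert x' X) dY = insert eps (Sp X d)"
proof (intro equalityI subsetI)
  fix s assume "s \<in> Sp (insert x' X) dY"
  then obtain u v where uv: "u \<in> insert x' X" "v \<in> insert x' X" "u \<noteq> v" "s = dY u v"
    unfolding Sp_def by blast
  then show "s \<in> insert eps (Sp X d)"
    using d_proj_mem_Sp[OF uv(1,2)] by (auto simp: dY_def)
next
  fix s assume "s \<in> insert eps (Sp X d)"
  then consider "s = eps" | u v where "u \<in> X" "v \<in> X" "u \<noteq> v" "s = d u v"
    unfolding Sp_def by blast
  then show "s \<in> Sp (insert x' X) dY"
  proof cases
    case 1
    then have "s = dY x x'" using x_neq_x' by (simp add: dY_def proj_def)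
    then show ?thesis unfolding Sp_def using x_mem x_neq_x' by blast
  next
    case 2
    then have "s = dY u v" using dY_eq_d by simp
    then show ?thesis unfolding Sp_def using 2 by blast
  qed
qed

lemma in_U_Y: "in_U (insert x' X) dY"
proof -
  have "card (insert x' X) = card X + 1"
    using finite_X x'_not_mem by simp
  moreover have "card (Sp (insert x' X) dY) = card (Sp X d) + 1"
    unfolding Sp_Y using finite_Sp[OF finite_X] eps_less by (subst card_insert_disjoint) auto
  moreover have "card X \<ge> 1"
    using x_mem finite_X by (auto simp: Suc_le_eq card_gt_0_iff)
  ultimately show ?thesis
    unfolding in_U_def using ultrametric_Y finite_X card_Sp_X by simp
qed

lemma lift_subset: "B \<subseteq> X \<Longrightarrow> lift B \<subseteq> insert x' X"
  unfolding lift_def by auto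

lemma subset_lift: "B \<subseteq> lift B"
  unfolding lift_def by auto

lemma lift_singleton: "lift {x} = {x, x'}"
  unfolding lift_def by auto

lemma proj_image_lift: "B \<subseteq> X \<Longrightarrow> proj ` lift B = B"
  unfolding lift_def proj_def using x'_not_mem by (auto simp: image_iff)

lemma lift_eq_preimage: "C \<subseteq> B \<Longrightarrow> B \<subseteq> X \<Longrightarrow> lift C = {y \<in> lift B. proj y \<in> C}"
  unfolding lift_def proj_def using x'_not_mem x_neq_x' by auto

lemma inj_on_lift: "inj_on lift (Pow X)"
proof (rule inj_onI)
  fix A B assume "A \<in> Pow X" "B \<in> Pow X" "lift A = lift B"
  then have "lift A - {x'} = lift B - {x'}" by simp
  moreover have "lift A - {x'} = A" "lift B - {x'} = B"
    using \<open>A \<in> Pow X\<close> \<open>B \<in> Pow X\<close> x'_not_mem unfolding lift_def by auto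
  ultimately show "A = B" by simp
qed

lemma two_le_card_lift: "B \<subseteq> X \<Longrightarrow> 2 \<le> card B \<Longrightarrow> 2 \<le> card (lift B)"
  using card_mono[OF _ subset_lift, of B] finite_subset[OF lift_subset] finite_X by fastforce

lemma eps_less_diam:
  assumes "B \<subseteq> X" "2 \<le> card B"
  shows "eps < diam B d"
proof -
  obtain u v where uv: "u \<in> B" "v \<in> B" "u \<noteq> v"
    using assms(2) by (rule two_le_cardE)
  have "d u v \<in> Sp X d" unfolding Sp_def using uv assms(1) by blast
  then have "eps < d u v" by (rule eps_less)
  also have "d u v \<le> diam B d"
    using dist_le_diam[OF finite_subset[OF assms(1) finite_X] uv(1,2)] .
  finally show ?thesis .
qed

lemma diam_lift:
  assumes "B \<subseteq> X" "2 \<le> card B"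
  shows "diam (lift B) dY = diam B d"
proof -
  have fin: "finite B" "finite (lift B)"
    using finite_subset[OF assms(1) finite_X] finite_subset[OF lift_subset[OF assms(1)]] finite_X
    by auto
  have "B \<noteq> {}" using assms(2) by auto
  with fin(1) obtain u v where uv: "u \<in> B" "v \<in> B" "diam B d = d u v"
    by (rule diam_attained)
  have le: "dY s t \<le> diam B d" if "s \<in> lift B" "t \<in> lift B" for s t
  proof -
    have "proj s \<in> B" "proj t \<in> B" using that proj_image_lift[OF assms(1)] by blast+
    then have "d (proj s) (proj t) \<le> diam B d" by (rule dist_le_diam[OF fin(1)])
    then show ?thesis using eps_less_diam[OF assms] eps_pos unfolding dY_def by auto
  qed
  show ?thesis
    unfolding diam_def[of "lift B"]
  proof (rule Max_eqI)
    show "finite {dY s t |s t. s \<in> lift B \<and> t \<in> lift B}"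
      using fin(2) by (simp add: finite_image_set2)
    have "diam B d = dY u v"
      using uv(3) dY_eq_d[OF subsetD[OF assms(1) uv(1)] subsetD[OF assms(1) uv(2)]] by simp
    then show "diam B d \<in> {dY s t |s t. s \<in> lift B \<and> t \<in> lift B}"
      using uv subset_lift by blast
  qed (use le in blast)
qed

lemma child_sets_lift:
  assumes "B \<subseteq> X" "2 \<le> card B"
  shows "child_sets (lift B) dY = lift ` child_sets B d"
proof -
  let ?D = "diam B d"
  have D: "eps < ?D" "0 < ?D" using eps_less_diam[OF assms] eps_pos by auto
  have child_class: "{y \<in> lift B. dY z y < ?D} = lift {y \<in> B. d (proj z) y < ?D}"
    if z: "z \<in> lift B" for z
  proof -
    have "lift {y \<in> B. d (proj z) y < ?D} = {y \<in> lift B. proj y \<in> {y \<in> B. d (proj z) y < ?D}}"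
      using assms(1) by (intro lift_eq_preimage) auto
    also have "\<dots> = {y \<in> lift B. dY z y < ?D}"
    proof (intro Collect_cong conj_cong refl)
      fix y assume y: "y \<in> lift B"
      have "proj y \<in> B" "proj z \<in> B" using y z proj_image_lift[OF assms(1)] by blast+
      moreover have "d (proj y) (proj y) = 0"
        using ultrametric_spaceD(1)[OF ultrametric_X] \<open>proj y \<in> B\<close> assms(1) by blast
      ultimately show "proj y \<in> {y \<in> B. d (proj z) y < ?D} \<longleftrightarrow> dY z y < ?D"
        unfolding dY_def using D by auto
    qed
    finally show ?thesis by simp
  qed
  have "child_sets (lift B) dY = {lift {y \<in> B. d (proj z) y < ?D} | z. z \<in> lift B}"
    unfolding child_sets_def diam_lift[OF assms] using child_class by blast
  also have "\<dots> = {lift {y \<in> B. d w y < ?D} | w. w \<in> proj ` lift B}" by blast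
  also have "\<dots> = lift ` child_sets B d"
    unfolding proj_image_lift[OF assms(1)] child_sets_def by blast
  finally show ?thesis .
qed

lemma child_sets_pair: "child_sets {x, x'} dY = {{x}, {x'}}"
proof -
  have dY_pair: "dY x x' = eps" "dY x' x = eps" "dY x x = 0" "dY x' x' = 0"
    unfolding dY_def proj_def using x_neq_x' by auto
  have "{dY u v | u v. u \<in> {x, x'} \<and> v \<in> {x, x'}} = {dY x x, dY x x', dY x' x, dY x' x'}"
    by blast
  then have "{dY u v | u v. u \<in> {x, x'} \<and> v \<in> {x, x'}} = {0, eps}"
    unfolding dY_pair by auto
  then have "diam {x, x'} dY = eps" unfolding diam_def using eps_pos by simp
  moreover have "{y \<in> {x, x'}. dY x y < eps} = {x}" "{y \<in> {x, x'}. dY x' y < eps} = {x'}"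
    using dY_pair eps_pos by auto
  ultimately show ?thesis unfolding child_sets_def by auto
qed

lemma lift_mem_rep_nodes: "B \<in> rep_nodes X d \<Longrightarrow> lift B \<in> rep_nodes (insert x' X) dY"
proof (induction rule: rep_nodes.induct)
  case root
  have "lift X = insert x' X" unfolding lift_def using x_mem by simp
  then show ?case using rep_nodes.root by metis
next
  case (child B C)
  have "B \<subseteq> X" using child.hyps(1) by (rule rep_nodes_subset)
  show ?case
  proof (rule rep_nodes.child[OF child.IH])
    show "2 \<le> card (lift B)" using two_le_card_lift[OF \<open>B \<subseteq> X\<close> child.hyps(2)] .
    show "lift C \<in> child_sets (lift B) dY"
      unfolding child_sets_lift[OF \<open>B \<subseteq> X\<close> child.hyps(2)] using child.hyps(3) by blast
  qed
qed

lemma card_lift_cases: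
  assumes "B \<in> rep_nodes X d" "2 \<le> card (lift B)"
  shows "2 \<le> card B \<or> B = {x}"
proof (rule ccontr)
  assume contra: "\<not> (2 \<le> card B \<or> B = {x})"
  have "B \<subseteq> X" "B \<noteq> {}"
    using rep_nodes_subset[OF assms(1)] rep_nodes_nonempty[OF ultrametric_X _ assms(1)] x_mem by auto
  then have "0 < card B" using finite_subset[OF _ finite_X] by (simp add: card_gt_0_iff)
  then have "card B = 1" using contra by linarith
  then obtain y where "B = {y}" by (rule card_1_singletonE)
  then show False using contra assms(2) unfolding lift_def by (auto split: if_splits)
qed

lemma rep_arcs_Y_cases:
  assumes "B \<in> insert {x'} (insert {x} (lift ` rep_nodes X d))" "2 \<le> card B"
    and "C \<in> child_sets B dY"
  shows "(B, C) \<in> map_prod lift lift ` rep_arcs X d \<or> (B = {x, x'} \<and> (C = {x} \<or> C = {x'}))"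
proof -
  obtain B0 where B0: "B0 \<in> rep_nodes X d" "B = lift B0" using assms(1,2) by auto
  have "B0 \<subseteq> X" using B0(1) by (rule rep_nodes_subset)
  from card_lift_cases[OF B0(1)] assms(2) B0(2) consider "2 \<le> card B0" | "B0 = {x}" by blast
  then show ?thesis
  proof cases
    case 1
    then obtain C0 where "C0 \<in> child_sets B0 d" "C = lift C0"
      using assms(3) child_sets_lift[OF \<open>B0 \<subseteq> X\<close> 1] B0(2) by auto
    then show ?thesis using B0 1 unfolding rep_arcs_def by blast
  next
    case 2
    then show ?thesis using assms(3) B0(2) child_sets_pair lift_singleton by auto
  qed
qed

lemma rep_nodes_Y:
  assumes "{x} \<in> rep_nodes X d"
  shows "rep_nodes (insert x' X) dY = insert {x'} (insert {x} (lift ` rep_nodes X d))"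
proof
  show "rep_nodes (insert x' X) dY \<subseteq> insert {x'} (insert {x} (lift ` rep_nodes X d))"
  proof
    fix B assume "B \<in> rep_nodes (insert x' X) dY"
    then show "B \<in> insert {x'} (insert {x} (lift ` rep_nodes X d))"
    proof (induction rule: rep_nodes.induct)
      case root
      have "lift X = insert x' X" unfolding lift_def using x_mem by simp
      then show ?case using rep_nodes.root by blast
    next
      case (child B C)
      from rep_arcs_Y_cases[OF child.IH child.hyps(2,3)] show ?case
        unfolding rep_arcs_def by (auto intro: rep_nodes.child)
    qed
  qed
  have pair: "{x, x'} \<in> rep_nodes (insert x' X) dY"
    using lift_mem_rep_nodes[OF assms] lift_singleton by simp
  have "{x} \<in> rep_nodes (insert x' X) dY" "{x'} \<in> rep_nodes (insert x' X) dY"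
    using rep_nodes.child[OF pair] x_neq_x' child_sets_pair by auto
  then show "insert {x'} (insert {x} (lift ` rep_nodes X d)) \<subseteq> rep_nodes (insert x' X) dY"
    using lift_mem_rep_nodes by auto
qed

lemma rep_arcs_Y:
  assumes "{x} \<in> rep_nodes X d"
  shows "rep_arcs (insert x' X) dY =
    map_prod lift lift ` rep_arcs X d \<union> {({x, x'}, {x}), ({x, x'}, {x'})}"
proof
  show "rep_arcs (insert x' X) dY \<subseteq> map_prod lift lift ` rep_arcs X d \<union> {({x, x'}, {x}), ({x, x'}, {x'})}"
    using rep_arcs_Y_cases unfolding rep_arcs_def[of "insert x' X"] rep_nodes_Y[OF assms] by blast
  have pair: "{x, x'} \<in> rep_nodes (insert x' X) dY"
    using lift_mem_rep_nodes[OF assms] lift_singleton by simp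
  have "({x, x'}, {x}) \<in> rep_arcs (insert x' X) dY" "({x, x'}, {x'}) \<in> rep_arcs (insert x' X) dY"
    unfolding rep_arcs_def using pair x_neq_x' child_sets_pair by auto
  moreover have "map_prod lift lift ` rep_arcs X d \<subseteq> rep_arcs (insert x' X) dY"
  proof
    fix e assume "e \<in> map_prod lift lift ` rep_arcs X d"
    then obtain B C where e: "e = (lift B, lift C)" "B \<in> rep_nodes X d" "2 \<le> card B"
      "C \<in> child_sets B d" unfolding rep_arcs_def by auto
    have "B \<subseteq> X" using e(2) by (rule rep_nodes_subset)
    show "e \<in> rep_arcs (insert x' X) dY"
      unfolding rep_arcs_def using e lift_mem_rep_nodes[OF e(2)] two_le_card_lift[OF \<open>B \<subseteq> X\<close> e(3)]
        child_sets_lift[OF \<open>B \<subseteq> X\<close> e(3)] by auto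
  qed
  ultimately show "map_prod lift lift ` rep_arcs X d \<union> {({x, x'}, {x}), ({x, x'}, {x'})}
      \<subseteq> rep_arcs (insert x' X) dY" by blast
qed

lemma rep_edges_Y:
  assumes "{x} \<in> rep_nodes X d"
  shows "rep_edges (insert x' X) dY = map_prod lift lift ` rep_edges X d
    \<union> {({x}, {x, x'}), ({x, x'}, {x})} \<union> {({x'}, {x, x'}), ({x, x'}, {x'})}"
proof -
  have "map_prod lift lift ` (rep_arcs X d)\<inverse> = (map_prod lift lift ` rep_arcs X d)\<inverse>"
    by auto
  then show ?thesis
    unfolding rep_edges_eq_arcs rep_arcs_Y[OF assms] image_Un converse_Un by blast
qed

lemma graph_iso_betw_split:
  assumes iso: "graph_iso_betw f V E (rep_nodes X d) (rep_edges X d)" and EV: "E \<subseteq> V \<times> V"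
    and "p \<in> V" "f p = {x}" "a \<notin> V" "b \<notin> V" "a \<noteq> b"
  shows "graph_iso_betw ((lift \<circ> f)(a := {x}, b := {x'})) (insert b (insert a V))
    (E \<union> {(a, p), (p, a)} \<union> {(b, p), (p, b)})
    (rep_nodes (insert x' X) dY) (rep_edges (insert x' X) dY)"
proof -
  let ?N = "lift ` rep_nodes X d" and ?R = "map_prod lift lift ` rep_edges X d"
  have "{x} \<in> rep_nodes X d"
    using bij_betw_apply[OF graph_iso_betwD(1)[OF iso] \<open>p \<in> V\<close>] \<open>f p = {x}\<close> by simp
  have "inj_on lift (rep_nodes X d)"
    using inj_on_lift by (rule inj_on_subset) (auto dest: rep_nodes_subset)
  with iso rep_edges_subset have "graph_iso_betw (lift \<circ> f) V E ?N ?R"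
    by (rule graph_iso_betw_image)
  moreover have R: "?R \<subseteq> ?N \<times> ?N" using rep_edges_subset by auto
  moreover have "{x} \<notin> ?N"
    using x_neq_x' unfolding lift_def by (auto split: if_splits)
  ultimately have "graph_iso_betw ((lift \<circ> f)(a := {x})) (insert a V) (E \<union> {(a, p), (p, a)})
      (insert {x} ?N) (?R \<union> {({x}, {x, x'}), ({x, x'}, {x})})"
    using graph_iso_betw_add_pendant[of "lift \<circ> f" V E ?N ?R a "{x}" p] EV assms(3-5)
    by (simp add: lift_singleton)
  moreover have "E \<union> {(a, p), (p, a)} \<subseteq> insert a V \<times> insert a V" using EV assms(3) by auto
  moreover have "{x, x'} \<in> ?N" using \<open>{x} \<in> rep_nodes X d\<close> lift_singleton by force
  then have "?R \<union> {({x}, {x, x'}), ({x, x'}, {x})} \<subseteq> insert {x} ?N \<times> insert {x} ?N"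
    using R by blast
  moreover have "{x'} \<notin> insert {x} ?N"
    using x_neq_x' x'_not_mem unfolding lift_def by (auto split: if_splits dest: rep_nodes_subset)
  moreover have "p \<noteq> a" using assms(3,5) by blast
  ultimately have "graph_iso_betw ((lift \<circ> f)(a := {x}, b := {x'})) (insert b (insert a V))
    (E \<union> {(a, p), (p, a)} \<union> {(b, p), (p, b)})
    (insert {x'} (insert {x} ?N)) (?R \<union> {({x}, {x, x'}), ({x, x'}, {x})} \<union> {({x'}, {x, x'}), ({x, x'}, {x'})})"
    using graph_iso_betw_add_pendant[of "(lift \<circ> f)(a := {x})" "insert a V" _ "insert {x} ?N" _ b "{x'}" p]
      assms(3,4,6,7)
    by (simp add: lift_singleton)
  then show ?thesis
    unfolding rep_nodes_Y[OF \<open>{x} \<in> rep_nodes X d\<close>] rep_edges_Y[OF \<open>{x} \<in> rep_nodes X d\<close>] .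
qed

end

section \<open>Realising strictly binary trees\<close>

lemma rep_nodes_leaf_singleton:
  assumes "ultrametric_space X d" "finite X" "X \<noteq> {}" "B \<in> rep_nodes X d"
    and "degree (rep_edges X d) B \<le> 1"
  obtains z where "z \<in> X" "B = {z}"
proof -
  have "B \<subseteq> X" "B \<noteq> {}"
    using rep_nodes_subset[OF assms(4)] rep_nodes_nonempty[OF assms(1,3,4)] .
  moreover have "\<not> 2 \<le> card B"
    using two_le_degree_rep_edges[OF assms(1,2,4)] assms(5) by linarith
  moreover have "0 < card B"
    using calculation(1,2) finite_subset[OF _ assms(2)] by (simp add: card_gt_0_iff)
  ultimately have "card B = 1" by linarith
  then obtain z where "B = {z}" by (rule card_1_singletonE)
  then show thesis using that \<open>B \<subseteq> X\<close> by blast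
qed

lemma rep_nodes_singleton: "rep_nodes {z} d = {{z}}"
proof
  show "rep_nodes {z} d \<subseteq> {{z}}"
  proof
    fix B assume "B \<in> rep_nodes {z} d"
    then show "B \<in> {{z}}" by (induction rule: rep_nodes.induct) auto
  qed
qed (auto intro: rep_nodes.root)

lemma rep_edges_singleton: "rep_edges {z} d = {}"
  unfolding rep_edges_def rep_nodes_singleton by auto

lemma in_U_singleton: "in_U {z} (\<lambda>_ _. 0)"
  unfolding in_U_def ultrametric_space_def Sp_def by auto

lemma rep_tree_attach_cherry:
  fixes X :: "'a set"
  assumes "infinite (UNIV :: 'a set)" and sbt: "strictly_binary_tree V E r"
    and cherry: "a \<noteq> b" "a \<in> V - {r}" "b \<in> V - {r}" "{w. (a, w) \<in> E} = {p}" "{w. (b, w) \<in> E} = {p}"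
    and U: "in_U X d"
    and iso: "graph_iso_betw f (V - {a, b}) (Restr E (V - {a, b})) (rep_nodes X d) (rep_edges X d)"
  shows "\<exists>(Y :: 'a set) dY. in_U Y dY \<and> graph_iso V E (rep_nodes Y dY) (rep_edges Y dY)"
proof -
  let ?V' = "V - {a, b}" and ?E' = "Restr E (V - {a, b})"
  note p = cherry_parent_becomes_leaf[OF sbt cherry]
  have "E \<subseteq> V \<times> V" "sym E" using sbt unfolding strictly_binary_tree_def finite_tree_def by auto
  have "ultrametric_space X d" "finite X" "X \<noteq> {}" using U unfolding in_U_def by auto
  moreover have "f p \<in> rep_nodes X d"
    using graph_iso_betwD(1)[OF iso] p(1) by (rule bij_betw_apply)
  moreover have "degree (rep_edges X d) (f p) \<le> 1"
    using degree_graph_iso_betw[OF iso _ rep_edges_subset p(1)] p(2) by auto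
  ultimately obtain x where "x \<in> X" "f p = {x}" by (rule rep_nodes_leaf_singleton)
  obtain x' where "x' \<notin> X" using ex_new_if_finite[OF assms(1) \<open>finite X\<close>] by blast
  interpret twin_point X d x x' using U \<open>x \<in> X\<close> \<open>x' \<notin> X\<close> by unfold_locales
  have "graph_iso_betw ((lift \<circ> f)(a := {x}, b := {x'})) (insert b (insert a ?V'))
      (?E' \<union> {(a, p), (p, a)} \<union> {(b, p), (p, b)}) (rep_nodes (insert x' X) dY) (rep_edges (insert x' X) dY)"
    using iso _ p(1) \<open>f p = {x}\<close> _ _ cherry(1) by (rule graph_iso_betw_split) auto
  moreover have "insert b (insert a ?V') = V" using cherry(2,3) by auto
  moreover have "?E' \<union> {(a, p), (p, a)} \<union> {(b, p), (p, b)} = E"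
    using cherry_edges_split[OF \<open>E \<subseteq> V \<times> V\<close> \<open>sym E\<close> cherry(1,4,5)] by simp
  ultimately show ?thesis using in_U_Y unfolding graph_iso_iff_graph_iso_betw by metis
qed

lemma rep_tree_single_vertex:
  assumes "strictly_binary_tree V E r" "card V = 1"
  shows "\<exists>(X :: 'a set) d. in_U X d \<and> graph_iso V E (rep_nodes X d) (rep_edges X d)"
proof -
  obtain v where "V = {v}" using assms(2) by (rule card_1_singletonE)
  moreover have "E \<subseteq> V \<times> V" "irrefl E"
    using assms(1) unfolding strictly_binary_tree_def finite_tree_def by auto
  ultimately have "E = {}" by (auto simp: irrefl_def)
  fix z :: 'a
  from \<open>V = {v}\<close> \<open>E = {}\<close> have "graph_iso V E (rep_nodes {z} (\<lambda>_ _. 0)) (rep_edges {z} (\<lambda>_ _. 0))"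
    unfolding graph_iso_def rep_nodes_singleton rep_edges_singleton
    by (intro exI[of _ "\<lambda>_. {z}"]) (auto simp: bij_betw_def)
  then show ?thesis using in_U_singleton[of z] by (intro exI) (rule conjI)
qed

theorem lemma18:
  fixes V :: "'v set" and E :: "('v \<times> 'v) set" and r :: 'v
  assumes "strictly_binary_tree V E r"
  shows "\<exists>(X :: nat set) d. in_U X d \<and> graph_iso V E (rep_nodes X d) (rep_edges X d)"
  using assms
proof (induction "card V" arbitrary: V E rule: less_induct)
  case less
  show ?case
  proof (cases "card V = 1")
    case False
    obtain a b p where cherry: "a \<noteq> b" "a \<in> V - {r}" "b \<in> V - {r}"
      "{w. (a, w) \<in> E} = {p}" "{w. (b, w) \<in> E} = {p}"
      using less.prems False by (rule strictly_binary_tree_obtain_cherry)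
    have "finite V" using less.prems unfolding strictly_binary_tree_def finite_tree_def by blast
    then have "card (V - {a, b}) < card V" using cherry(2) by (intro psubset_card_mono) auto
    moreover have "strictly_binary_tree (V - {a, b}) (Restr E (V - {a, b})) r"
      using strictly_binary_tree_remove_cherry[OF less.prems cherry(1) _ _ cherry(4,5)] cherry(2,3) by blast
    ultimately have "\<exists>(X :: nat set) d.
        in_U X d \<and> graph_iso (V - {a, b}) (Restr E (V - {a, b})) (rep_nodes X d) (rep_edges X d)"
      by (rule less.hyps)
    then obtain X :: "nat set" and d f where "in_U X d"
      "graph_iso_betw f (V - {a, b}) (Restr E (V - {a, b})) (rep_nodes X d) (rep_edges X d)"
      unfolding graph_iso_iff_graph_iso_betw by blast
    with infinite_UNIV_nat less.prems cherry show ?thesis by (rule rep_tree_attach_cherry)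
  qed (use less.prems in \<open>rule rep_tree_single_vertex\<close>)
qed

end
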